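(* Let $p=p(n)=o\!\left(\frac1n\right)$. Then for all sufficiently large $n\in\mathbb{N}$ we have $u_2(n,p)=0$ and $u_2'(n,p)=0$.
   Context: $G(n,p)$ is the Erdős–Rényi random graph on $n$ labelled vertices (vertex set $V$), each edge present independently with probability $p=p(n)$; $\mathbb{P}_{n,p}$ is the corresponding probability and $q=1-p$. A diameter graph in $\mathbb{R}^d$ is a graph $(V,E)$ with $V\subset\mathbb{R}^d$ finite and $E=\{\{\mathbf{x},\mathbf{y}\}\subseteq V: |\mathbf{x}-\mathbf{y}|=\operatorname{diam}V\}$, where $\operatorname{diam}V=\max_{\mathbf{x},\mathbf{y}\in V}|\mathbf{x}-\mathbf{y}|$ (Euclidean norm); a graph is a diameter graph in $\mathbb{R}^d$ if it is isomorphic to one. $u_d(n,p)$ is the largest positive integer $k$ such that $\mathbb{P}_{n,p}\big(\exists W\subseteq V,\ |W|=k,\ G[W]$ is a diameter graph in $\mathbb{R}^d$ and $\chi(G[W])=d+1\big)>\frac12$, where $G[W]$ is the induced subgraph; if no such $k$ exists, $u_d(n,p)=0$. $u_d'(n,p)$ is defined identically with the additional requirement that $G[W]$ be connected. *)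

theory Defs
  imports Complex_Main "HOL-Library.Landau_Symbols"
begin

text \<open>Vertex set of G(n,p) is {0..<n}; a graph is a set of 2-element edges.\<close>

definition all_pairs :: "nat \<Rightarrow> nat set set" where
  "all_pairs n = {e. e \<subseteq> {0..<n} \<and> card e = 2}"

definition prob_gnp :: "nat \<Rightarrow> real \<Rightarrow> (nat set set \<Rightarrow> bool) \<Rightarrow> real" where
  "prob_gnp n p A =
     (\<Sum>E\<in>Pow (all_pairs n). if A E then p ^ card E * (1 - p) ^ (card (all_pairs n) - card E) else 0)"

definition induced :: "nat set set \<Rightarrow> nat set \<Rightarrow> nat set set" where
  "induced E W = {e \<in> E. e \<subseteq> W}"

text \<open>Euclidean distance in R^d, points represented as nat => real using the first d coordinates.\<close>
definition edist :: "nat \<Rightarrow> (nat \<Rightarrow> real) \<Rightarrow> (nat \<Rightarrow> real) \<Rightarrow> real" where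
  "edist d x y = sqrt (\<Sum>i<d. (x i - y i)^2)"

definition in_Rd :: "nat \<Rightarrow> (nat \<Rightarrow> real) \<Rightarrow> bool" where
  "in_Rd d x \<longleftrightarrow> (\<forall>i\<ge>d. x i = 0)"

text \<open>(W,F) is (isomorphic to) a diameter graph in R^d: there is an injective placement
  f of W into R^d such that the edges are exactly the pairs at distance diam (f ` W).\<close>
definition diameter_graph :: "nat \<Rightarrow> nat set \<Rightarrow> nat set set \<Rightarrow> bool" where
  "diameter_graph d W F \<longleftrightarrow>
     (\<exists>f. (\<forall>v\<in>W. in_Rd d (f v)) \<and> inj_on f W \<and>
       (\<forall>e. e \<in> F \<longleftrightarrow>
          (\<exists>x\<in>W. \<exists>y\<in>W. x \<noteq> y \<and> e = {x, y} \<and>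
             edist d (f x) (f y) = Max {edist d (f a) (f b) | a b. a \<in> W \<and> b \<in> W})))"

definition chromatic :: "nat set \<Rightarrow> nat set set \<Rightarrow> nat" where
  "chromatic W F = (LEAST k. \<exists>c::nat \<Rightarrow> nat. (\<forall>v\<in>W. c v < k) \<and>
                      (\<forall>e\<in>F. \<forall>x\<in>e. \<forall>y\<in>e. x \<noteq> y \<longrightarrow> c x \<noteq> c y))"

definition connected_graph :: "nat set \<Rightarrow> nat set set \<Rightarrow> bool" where
  "connected_graph W F \<longleftrightarrow>
     (\<forall>x\<in>W. \<forall>y\<in>W. (x, y) \<in> {(a, b). {a, b} \<in> F}\<^sup>*)"

definition good_event :: "bool \<Rightarrow> nat \<Rightarrow> nat \<Rightarrow> nat \<Rightarrow> nat set set \<Rightarrow> bool" where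
  "good_event conn d n k E \<longleftrightarrow>
     (\<exists>W. W \<subseteq> {0..<n} \<and> card W = k \<and>
        diameter_graph d W (induced E W) \<and> chromatic W (induced E W) = d + 1 \<and>
        (conn \<longrightarrow> connected_graph W (induced E W)))"

definition u_gen :: "bool \<Rightarrow> nat \<Rightarrow> nat \<Rightarrow> real \<Rightarrow> nat" where
  "u_gen conn d n p =
     (if \<exists>k>0. prob_gnp n p (good_event conn d n k) > 1/2
      then GREATEST k. k > 0 \<and> prob_gnp n p (good_event conn d n k) > 1/2
      else 0)"

definition u :: "nat \<Rightarrow> nat \<Rightarrow> real \<Rightarrow> nat" where
  "u d n p = u_gen False d n p"

definition u' :: "nat \<Rightarrow> nat \<Rightarrow> real \<Rightarrow> nat" where
  "u' d n p = u_gen True d n p"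

end

theory Submission
  imports Defs
begin

text \<open>Only the colouring condition matters. A graph in which every nonempty vertex set S spans fewer
  than |S| edges always has a vertex of degree at most one, so peeling such vertices off shows that it
  is 2-colourable. Hence a subgraph of chromatic number d + 1 \<ge> 3 forces some S with |S| = m
  spanning m edges. By the union bound this has probability at most the sum over m of
  (n choose m) ((m choose 2) choose m) p^m, and each term is at most (e^2 n p)^m; the sum is below
  1/2 once n p is small, and n p \<longrightarrow> 0 when p = o(1/n).\<close>

lemma finite_all_pairs: "finite (all_pairs n)"
  by (rule finite_subset[of _ "Pow {0..<n}"]) (auto simp: all_pairs_def)

lemma sum_Pow_binomial:
  fixes p q :: "'a::comm_semiring_1"
  assumes "finite Y"
  shows "(\<Sum>G\<in>Pow Y. p ^ card G * q ^ (card Y - card G)) = (p + q) ^ card Y"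
proof -
  have "(p + q) ^ card Y = (\<Prod>_\<in>Y. p + q)" by simp
  also have "\<dots> = (\<Sum>G\<in>Pow Y. (\<Prod>_\<in>G. p) * (\<Prod>_\<in>Y - G. q))"
    by (rule prod_add[OF assms])
  also have "\<dots> = (\<Sum>G\<in>Pow Y. p ^ card G * q ^ (card Y - card G))"
    using assms by (intro sum.cong) (auto simp: card_Diff_subset finite_subset)
  finally show ?thesis ..
qed

lemma prob_gnp_superset:
  assumes F: "F \<subseteq> all_pairs n"
  shows "prob_gnp n p (\<lambda>E. F \<subseteq> E) = p ^ card F"
proof -
  let ?X = "all_pairs n"
  let ?w = "\<lambda>E. p ^ card E * (1 - p) ^ (card ?X - card E)"
  have finX: "finite ?X" by (rule finite_all_pairs)
  have finF: "finite F" using F finX finite_subset by blast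
  have supersets: "{E \<in> Pow ?X. F \<subseteq> E} = (\<union>) F ` Pow (?X - F)"
    using F by (auto intro!: image_eqI[where x = "_ - F"])
  have "prob_gnp n p (\<lambda>E. F \<subseteq> E) = (\<Sum>E\<in>{E \<in> Pow ?X. F \<subseteq> E}. ?w E)"
    unfolding prob_gnp_def by (simp add: sum.inter_filter[symmetric] finX)
  also have "\<dots> = (\<Sum>G\<in>Pow (?X - F). ?w (F \<union> G))"
    unfolding supersets by (rule sum.reindex_cong[OF _ refl refl]) (auto simp: inj_on_def)
  also have "\<dots> = (\<Sum>G\<in>Pow (?X - F). p ^ card F * (p ^ card G * (1 - p) ^ (card (?X - F) - card G)))"
  proof (rule sum.cong[OF refl])
    fix G assume G: "G \<in> Pow (?X - F)"
    then have "finite G" using finX finite_subset by blast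
    then have "card (F \<union> G) = card F + card G"
      using G finF by (subst card_Un_disjoint) auto
    moreover have "card (?X - F) = card ?X - card F"
      using F finF by (simp add: card_Diff_subset)
    ultimately show "?w (F \<union> G) = p ^ card F * (p ^ card G * (1 - p) ^ (card (?X - F) - card G))"
      by (simp add: power_add diff_diff_add)
  qed
  also have "\<dots> = p ^ card F"
    using finX by (simp add: sum_distrib_left[symmetric] sum_Pow_binomial)
  finally show ?thesis .
qed

lemma prob_gnp_mono:
  assumes "0 \<le> p" "p \<le> 1" "\<And>E. E \<subseteq> all_pairs n \<Longrightarrow> A E \<Longrightarrow> B E"
  shows "prob_gnp n p A \<le> prob_gnp n p B"
  unfolding prob_gnp_def using assms by (intro sum_mono) auto

lemma prob_gnp_union_bound:
  assumes "0 \<le> p" "p \<le> 1" "finite I"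
  shows "prob_gnp n p (\<lambda>E. \<exists>i\<in>I. A i E) \<le> (\<Sum>i\<in>I. prob_gnp n p (A i))"
proof -
  let ?w = "\<lambda>E. p ^ card E * (1 - p) ^ (card (all_pairs n) - card E)"
  have "prob_gnp n p (\<lambda>E. \<exists>i\<in>I. A i E)
      \<le> (\<Sum>E\<in>Pow (all_pairs n). \<Sum>i\<in>I. if A i E then ?w E else 0)"
    unfolding prob_gnp_def
  proof (rule sum_mono)
    fix E :: "nat set set"
    have w: "0 \<le> ?w E" using assms by simp
    show "(if \<exists>i\<in>I. A i E then ?w E else 0) \<le> (\<Sum>i\<in>I. if A i E then ?w E else 0)"
    proof (cases "\<exists>i\<in>I. A i E")
      case True
      then obtain i where "i \<in> I" "A i E" by blast
      then have "?w E \<le> (\<Sum>i\<in>I. if A i E then ?w E else 0)"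
        using member_le_sum[of i I "\<lambda>i. if A i E then ?w E else 0"] w assms(3) by simp
      then show ?thesis using True by simp
    qed (simp add: w sum_nonneg)
  qed
  also have "\<dots> = (\<Sum>i\<in>I. prob_gnp n p (A i))"
    unfolding prob_gnp_def by (rule sum.swap)
  finally show ?thesis .
qed

lemma prob_gnp_contains_member:
  fixes p :: real
  assumes "0 \<le> p" "p \<le> 1" "finite \<F>" "\<And>F. F \<in> \<F> \<Longrightarrow> F \<subseteq> all_pairs n \<and> card F = m"
  shows "prob_gnp n p (\<lambda>E. \<exists>F\<in>\<F>. F \<subseteq> E) \<le> card \<F> * p ^ m"
proof -
  have "prob_gnp n p (\<lambda>E. \<exists>F\<in>\<F>. F \<subseteq> E) \<le> (\<Sum>F\<in>\<F>. prob_gnp n p (\<lambda>E. F \<subseteq> E))"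
    using assms(1-3) by (rule prob_gnp_union_bound)
  also have "\<dots> = (\<Sum>F\<in>\<F>. p ^ m)"
    using assms(4) by (intro sum.cong) (auto simp: prob_gnp_superset)
  finally show ?thesis by simp
qed

definition proper_colouring :: "nat \<Rightarrow> 'a set \<Rightarrow> 'a set set \<Rightarrow> ('a \<Rightarrow> nat) \<Rightarrow> bool" where
  "proper_colouring k W F c \<longleftrightarrow>
     (\<forall>v\<in>W. c v < k) \<and> (\<forall>e\<in>F. \<forall>x\<in>e. \<forall>y\<in>e. x \<noteq> y \<longrightarrow> c x \<noteq> c y)"

text \<open>Every nonempty vertex set spans fewer edges than vertices: for simple graphs this says the
  graph is a forest.\<close>
definition sparse_graph :: "'a set \<Rightarrow> 'a set set \<Rightarrow> bool" where
  "sparse_graph W F \<longleftrightarrow> (\<forall>S\<subseteq>W. S \<noteq> {} \<longrightarrow> card {e\<in>F. e \<subseteq> S} < card S)"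

lemma sparse_graph_restrict:
  assumes "sparse_graph W F" "W' \<subseteq> W"
  shows "sparse_graph W' {e\<in>F. e \<subseteq> W'}"
proof -
  have "{e\<in>{e\<in>F. e \<subseteq> W'}. e \<subseteq> S} = {e\<in>F. e \<subseteq> S}" if "S \<subseteq> W'" for S
    using that by blast
  then show "sparse_graph W' {e\<in>F. e \<subseteq> W'}"
    using assms unfolding sparse_graph_def by auto
qed

lemma sum_degrees:
  assumes "finite W" "\<forall>e\<in>F. e \<subseteq> W"
  shows "(\<Sum>v\<in>W. card {e\<in>F. v \<in> e}) = (\<Sum>e\<in>F. card e)"
proof -
  have "F \<subseteq> Pow W" using assms by blast
  then have fF: "finite F" using assms(1) by (simp add: finite_subset)
  have "(\<Sum>v\<in>W. card {e\<in>F. v \<in> e}) = (\<Sum>v\<in>W. \<Sum>e\<in>F. if v \<in> e then 1 else 0)"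
    using fF by (simp add: sum.If_cases Int_def)
  also have "\<dots> = (\<Sum>e\<in>F. \<Sum>v\<in>W. if v \<in> e then 1 else 0)" by (rule sum.swap)
  also have "\<dots> = (\<Sum>e\<in>F. card e)"
  proof (rule sum.cong[OF refl])
    fix e assume "e \<in> F"
    then have "W \<inter> e = e" using assms by blast
    then show "(\<Sum>v\<in>W. if v \<in> e then 1 else 0) = card e"
      using assms by (simp add: sum.If_cases)
  qed
  finally show ?thesis .
qed

lemma sparse_graph_low_degree:
  assumes "finite W" "W \<noteq> {}" "\<forall>e\<in>F. e \<subseteq> W \<and> card e = 2" "sparse_graph W F"
  shows "\<exists>v\<in>W. card {e\<in>F. v \<in> e} \<le> 1"
proof (rule ccontr)
  assume "\<not> ?thesis"
  then have "(\<Sum>v\<in>W. 2) \<le> (\<Sum>v\<in>W. card {e\<in>F. v \<in> e})"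
    by (intro sum_mono) fastforce
  also have "\<dots> = 2 * card F"
    using assms(1,3) by (simp add: sum_degrees)
  finally have "card W \<le> card {e\<in>F. e \<subseteq> W}"
    using assms(3) by (simp add: Collect_conj_eq Int_absorb2 subset_eq)
  moreover have "card {e\<in>F. e \<subseteq> W} < card W"
    using assms(2,4) unfolding sparse_graph_def by blast
  ultimately show False by simp
qed

lemma proper_colouring_extend:
  assumes c: "proper_colouring 2 (W - {v}) {e\<in>F. e \<subseteq> W - {v}} c"
    and F: "\<forall>e\<in>F. e \<subseteq> W \<and> card e = 2" and "finite W" and deg: "card {e\<in>F. v \<in> e} \<le> 1"
  shows "\<exists>c'. proper_colouring 2 W F c'"
proof -
  have "{e\<in>F. v \<in> e} \<subseteq> Pow W" using F by blast
  then have "finite {e\<in>F. v \<in> e}" using \<open>finite W\<close> by (simp add: finite_subset)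
  moreover have "card {e\<in>F. v \<in> e} = 0 \<or> card {e\<in>F. v \<in> e} = 1"
    using deg by linarith
  ultimately have "{e\<in>F. v \<in> e} = {} \<or> (\<exists>e0. {e\<in>F. v \<in> e} = {e0})"
    by (metis card_0_eq card_1_singletonE)
  then obtain col where col: "col < 2"
    and avoid: "\<And>e w. e \<in> F \<Longrightarrow> v \<in> e \<Longrightarrow> w \<in> e \<Longrightarrow> w \<noteq> v \<Longrightarrow> c w \<noteq> col"
  proof (elim disjE exE)
    assume "{e\<in>F. v \<in> e} = {}"
    then show ?thesis using that[of 0] by auto
  next
    fix e0 assume e0: "{e\<in>F. v \<in> e} = {e0}"
    then have "e0 \<in> F" "v \<in> e0" by auto
    moreover obtain a b where "e0 = {a, b}" "a \<noteq> b"
      using F \<open>e0 \<in> F\<close> by (meson card_2_iff)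
    ultimately obtain w where w: "e0 = {v, w}" "w \<noteq> v" by blast
    then have "w \<in> W - {v}" using F \<open>e0 \<in> F\<close> by auto
    then have "c w < 2" using c unfolding proper_colouring_def by blast
    moreover have "e = e0" if "e \<in> F" "v \<in> e" for e using e0 that by blast
    moreover have "c w \<noteq> 1 - c w" using \<open>c w < 2\<close> by arith
    ultimately show ?thesis using w by (intro that[of "1 - c w"]) auto
  qed
  have "proper_colouring 2 W F (c(v := col))"
    unfolding proper_colouring_def
  proof (intro conjI ballI impI)
    show "(c(v := col)) u < 2" if "u \<in> W" for u
      using that col c unfolding proper_colouring_def by auto
    fix e x y assume e: "e \<in> F" "x \<in> e" "y \<in> e" "x \<noteq> y"
    show "(c(v := col)) x \<noteq> (c(v := col)) y"
    proof (cases "v \<in> e")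
      case True
      obtain a b where "e = {a, b}" using F e(1) by (meson card_2_iff)
      then have "x = v \<or> y = v" using e True by blast
      then show ?thesis using avoid[OF e(1) True] e by auto
    next
      case False
      then have "e \<in> {e\<in>F. e \<subseteq> W - {v}}" using F e by auto
      then have "c x \<noteq> c y" using c e unfolding proper_colouring_def by blast
      then show ?thesis using e False by auto
    qed
  qed
  then show ?thesis by blast
qed

lemma sparse_graph_two_colourable:
  assumes "finite W" "\<forall>e\<in>F. e \<subseteq> W \<and> card e = 2" "sparse_graph W F"
  shows "\<exists>c. proper_colouring 2 W F c"
  using assms
proof (induction W arbitrary: F rule: finite_psubset_induct)
  case (psubset W)
  show ?case
  proof (cases "W = {}")
    case True
    then have "F = {}" using psubset.prems by fastforce
    then show ?thesis using True unfolding proper_colouring_def by auto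
  next
    case False
    then obtain v where v: "v \<in> W" "card {e\<in>F. v \<in> e} \<le> 1"
      using sparse_graph_low_degree[OF psubset.hyps(1) _ psubset.prems] by blast
    have "W - {v} \<subset> W" using v(1) by blast
    moreover have "\<forall>e\<in>{e\<in>F. e \<subseteq> W - {v}}. e \<subseteq> W - {v} \<and> card e = 2"
      using psubset.prems(1) by blast
    moreover have "sparse_graph (W - {v}) {e\<in>F. e \<subseteq> W - {v}}"
      using psubset.prems(2) by (rule sparse_graph_restrict) blast
    ultimately obtain c where "proper_colouring 2 (W - {v}) {e\<in>F. e \<subseteq> W - {v}} c"
      using psubset.IH by blast
    from proper_colouring_extend[OF this psubset.prems(1) psubset.hyps(1) v(2)]
    show ?thesis .
  qed
qed

lemma chromatic_le_2:
  assumes "finite W" "\<forall>e\<in>F. e \<subseteq> W \<and> card e = 2" "sparse_graph W F"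
  shows "chromatic W F \<le> 2"
  using sparse_graph_two_colourable[OF assms] unfolding chromatic_def proper_colouring_def
  by (intro Least_le) blast

definition edges_within :: "nat set \<Rightarrow> nat set set" where
  "edges_within S = {e. e \<subseteq> S \<and> card e = 2}"

definition has_dense_subgraph :: "nat \<Rightarrow> nat set set \<Rightarrow> bool" where
  "has_dense_subgraph n E \<longleftrightarrow> (\<exists>S\<subseteq>{0..<n}. S \<noteq> {} \<and> card S \<le> card {e\<in>E. e \<subseteq> S})"

definition dense_witnesses :: "nat \<Rightarrow> nat \<Rightarrow> nat set set set" where
  "dense_witnesses n m =
     (\<Union>S\<in>{S. S \<subseteq> {0..<n} \<and> card S = m}. {F. F \<subseteq> edges_within S \<and> card F = m})"

lemma good_event_imp_has_dense_subgraph: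
  assumes "2 \<le> d" "E \<subseteq> all_pairs n" "good_event conn d n k E"
  shows "has_dense_subgraph n E"
proof (rule ccontr)
  assume sparse: "\<not> has_dense_subgraph n E"
  obtain W where W: "W \<subseteq> {0..<n}" "chromatic W (induced E W) = d + 1"
    using assms(3) unfolding good_event_def by blast
  have "finite W" using W(1) finite_subset by blast
  moreover have "\<forall>e\<in>induced E W. e \<subseteq> W \<and> card e = 2"
    using assms(2) unfolding induced_def all_pairs_def by auto
  moreover have "sparse_graph W (induced E W)"
    unfolding sparse_graph_def
  proof (intro allI impI)
    fix S assume S: "S \<subseteq> W" "S \<noteq> {}"
    have "{e\<in>induced E W. e \<subseteq> S} = {e\<in>E. e \<subseteq> S}"
      using S unfolding induced_def by auto
    moreover have "S \<subseteq> {0..<n}" using S(1) W(1) by blast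
    then have "\<not> card S \<le> card {e\<in>E. e \<subseteq> S}"
      using sparse S(2) unfolding has_dense_subgraph_def by blast
    ultimately show "card {e\<in>induced E W. e \<subseteq> S} < card S" by simp
  qed
  ultimately have "chromatic W (induced E W) \<le> 2" by (rule chromatic_le_2)
  then show False using W(2) assms(1) by simp
qed

lemma has_dense_subgraph_witness:
  assumes E: "E \<subseteq> all_pairs n" and "has_dense_subgraph n E"
  shows "\<exists>m\<in>{1..n}. \<exists>F\<in>dense_witnesses n m. F \<subseteq> E"
proof -
  obtain S where S: "S \<subseteq> {0..<n}" "S \<noteq> {}" "card S \<le> card {e\<in>E. e \<subseteq> S}"
    using assms(2) unfolding has_dense_subgraph_def by blast
  have "finite S" using S(1) finite_subset by blast
  moreover have "card S \<le> card {0..<n}" using S(1) by (intro card_mono) auto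
  ultimately have m: "card S \<in> {1..n}" using S(2) by (auto simp: Suc_le_eq card_gt_0_iff)
  obtain F where F: "F \<subseteq> {e\<in>E. e \<subseteq> S}" "card F = card S"
    using obtain_subset_with_card_n[OF S(3)] by metis
  have "F \<subseteq> edges_within S" using F(1) E unfolding edges_within_def all_pairs_def by auto
  then have "F \<in> dense_witnesses n (card S)"
    using S(1) F(2) unfolding dense_witnesses_def by blast
  then show ?thesis using m F(1) by blast
qed

lemma finite_edges_within: "finite S \<Longrightarrow> finite (edges_within S)"
  by (rule finite_subset[of _ "Pow S"]) (auto simp: edges_within_def)

lemma card_dense_witnesses:
  "card (dense_witnesses n m) \<le> (n choose m) * ((m choose 2) choose m)"
proof -
  let ?Sm = "{S. S \<subseteq> {0..<n} \<and> card S = m}"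
  have "card (dense_witnesses n m) \<le> (\<Sum>S\<in>?Sm. card {F. F \<subseteq> edges_within S \<and> card F = m})"
    unfolding dense_witnesses_def by (rule card_UN_le) simp
  also have "\<dots> = (\<Sum>S\<in>?Sm. (m choose 2) choose m)"
  proof (rule sum.cong[OF refl])
    fix S assume S: "S \<in> ?Sm"
    then have "finite S" using finite_subset by blast
    then have "card (edges_within S) = m choose 2"
      using S unfolding edges_within_def by (simp add: n_subsets)
    then show "card {F. F \<subseteq> edges_within S \<and> card F = m} = (m choose 2) choose m"
      using n_subsets[OF finite_edges_within[OF \<open>finite S\<close>]] by simp
  qed
  also have "\<dots> = (n choose m) * ((m choose 2) choose m)"
    by (simp add: n_subsets)
  finally show ?thesis .
qed

lemma dense_witnesses_edges:
  "F \<in> dense_witnesses n m \<Longrightarrow> F \<subseteq> all_pairs n \<and> card F = m"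
  unfolding dense_witnesses_def edges_within_def all_pairs_def by auto

lemma finite_dense_witnesses: "finite (dense_witnesses n m)"
  by (rule finite_subset[of _ "Pow (all_pairs n)"])
     (auto dest: dense_witnesses_edges simp: finite_all_pairs)

lemma prob_has_dense_subgraph:
  fixes p :: real
  assumes "0 \<le> p" "p \<le> 1"
  shows "prob_gnp n p (has_dense_subgraph n)
    \<le> (\<Sum>m=1..n. real (n choose m) * real ((m choose 2) choose m) * p ^ m)"
proof -
  have "prob_gnp n p (has_dense_subgraph n)
      \<le> prob_gnp n p (\<lambda>E. \<exists>m\<in>{1..n}. \<exists>F\<in>dense_witnesses n m. F \<subseteq> E)"
    using assms has_dense_subgraph_witness by (intro prob_gnp_mono) auto
  also have "\<dots> \<le> (\<Sum>m=1..n. prob_gnp n p (\<lambda>E. \<exists>F\<in>dense_witnesses n m. F \<subseteq> E))"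
    using assms by (intro prob_gnp_union_bound) auto
  also have "\<dots> \<le> (\<Sum>m=1..n. real (card (dense_witnesses n m)) * p ^ m)"
    using assms finite_dense_witnesses dense_witnesses_edges
    by (intro sum_mono prob_gnp_contains_member) auto
  also have "\<dots> \<le> (\<Sum>m=1..n. real (n choose m) * real ((m choose 2) choose m) * p ^ m)"
  proof (intro sum_mono mult_right_mono)
    fix m
    show "real (card (dense_witnesses n m)) \<le> real (n choose m) * real ((m choose 2) choose m)"
      using card_dense_witnesses by (metis of_nat_le_iff of_nat_mult)
  qed (use assms in simp)
  finally show ?thesis .
qed

lemma of_nat_choose_le_power_div_fact: "real (a choose m) \<le> real a ^ m / fact m"
proof -
  have "real ((a choose m) * fact m) \<le> real (a ^ m)"
    by (simp only: of_nat_le_iff binomial_fact_pow)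
  then show ?thesis by (simp add: field_simps)
qed

lemma power_div_fact_le_exp:
  fixes x :: real
  assumes "0 \<le> x"
  shows "x ^ m / fact m \<le> exp x"
proof -
  have "(\<Sum>k\<in>{m}. x ^ k /\<^sub>R fact k) \<le> (\<Sum>k. x ^ k /\<^sub>R fact k)"
    using assms by (intro sum_le_suminf[OF summable_exp_generic]) auto
  then show ?thesis by (simp add: exp_def divide_inverse mult.commute)
qed

text \<open>From (m choose 2) \<le> m^2 and m^m / m! \<le> e^m, the latter applied twice.\<close>
lemma dense_witness_term_le:
  fixes p :: real
  assumes "0 \<le> p"
  shows "real (n choose m) * real ((m choose 2) choose m) * p ^ m \<le> (exp 2 * real n * p) ^ m"
proof -
  have "real (m choose 2) \<le> real m ^ 2"
    using binomial_fact_pow[of m 2] by (simp add: of_nat_le_iff[symmetric] del: of_nat_le_iff)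
  then have "real ((m choose 2) choose m) \<le> (real m ^ 2) ^ m / fact m"
    using of_nat_choose_le_power_div_fact[of "m choose 2" m]
    by (smt (verit) divide_right_mono fact_ge_zero of_nat_0_le_iff power_mono)
  then have "real (n choose m) * real ((m choose 2) choose m) * p ^ m
      \<le> (real n ^ m / fact m) * ((real m ^ 2) ^ m / fact m) * p ^ m"
    using of_nat_choose_le_power_div_fact[of n m] assms
    by (intro mult_mono mult_nonneg_nonneg) auto
  also have "\<dots> = real n ^ m * (real m ^ m / fact m) * (real m ^ m / fact m) * p ^ m"
    by (simp add: power_mult[symmetric] power2_eq_square power_mult_distrib mult.commute)
  also have "\<dots> \<le> real n ^ m * exp (real m) * exp (real m) * p ^ m"
    using power_div_fact_le_exp[of "real m" m] assms by (intro mult_mono mult_nonneg_nonneg) auto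
  also have "\<dots> = (exp 2 * real n * p) ^ m"
    by (simp add: power_mult_distrib exp_of_nat_mult[symmetric] exp_add[symmetric])
  finally show ?thesis .
qed

lemma geometric_sum_le:
  fixes x :: real
  assumes "0 \<le> x" "x < 1"
  shows "(\<Sum>m=1..n. x ^ m) \<le> x / (1 - x)"
  using assms by (auto simp: sum_gp divide_right_mono)

lemma prob_good_event_le:
  fixes p :: real
  assumes "2 \<le> d" "0 \<le> p" "p \<le> 1" "exp 2 * real n * p \<le> 1/8"
  shows "prob_gnp n p (good_event conn d n k) \<le> 1/7"
proof -
  let ?x = "exp 2 * real n * p"
  have "0 \<le> ?x" using assms by simp
  have "prob_gnp n p (good_event conn d n k) \<le> prob_gnp n p (has_dense_subgraph n)"
    using assms good_event_imp_has_dense_subgraph by (intro prob_gnp_mono) auto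
  also have "\<dots> \<le> (\<Sum>m=1..n. real (n choose m) * real ((m choose 2) choose m) * p ^ m)"
    using assms(2,3) by (rule prob_has_dense_subgraph)
  also have "\<dots> \<le> (\<Sum>m=1..n. ?x ^ m)"
    using assms by (intro sum_mono dense_witness_term_le) auto
  also have "\<dots> \<le> ?x / (1 - ?x)"
    using \<open>0 \<le> ?x\<close> assms by (intro geometric_sum_le) auto
  also have "\<dots> \<le> 1/7"
    using \<open>0 \<le> ?x\<close> assms by (simp add: field_simps)
  finally show ?thesis .
qed

lemma u_gen_eq_0:
  fixes p :: real
  assumes "2 \<le> d" "0 \<le> p" "p \<le> 1" "exp 2 * real n * p \<le> 1/8"
  shows "u_gen conn d n p = 0"
proof -
  have "\<not> prob_gnp n p (good_event conn d n k) > 1/2" for k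
    using prob_good_event_le[OF assms, of conn k] by linarith
  then show ?thesis unfolding u_gen_def by auto
qed

theorem theorem13:
  fixes p :: "nat \<Rightarrow> real"
  assumes "\<And>n. 0 \<le> p n \<and> p n \<le> 1"
    and "p \<in> o(\<lambda>n. 1 / real n)"
  shows "\<forall>\<^sub>F n in sequentially. u 2 n (p n) = 0 \<and> u' 2 n (p n) = 0"
proof -
  have "\<forall>\<^sub>F n in sequentially. norm (p n) \<le> 1 / (8 * exp 2) * norm (1 / real n)"
    using assms(2) by (rule landau_o.smallD) simp
  then show ?thesis
    using eventually_gt_at_top[of 0]
  proof eventually_elim
    case (elim n)
    then have "exp 2 * real n * p n \<le> 1/8"
      using assms(1)[of n] by (simp add: field_simps)
    then show ?case
      unfolding u_def u'_def using assms(1)[of n] by (simp add: u_gen_eq_0)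
  qed
qed

end
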